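(* Let $(V_1,\dots,V_n)$ be an $n$-tuple of doubly non-commuting isometries on $H$ and let $k\ge0$. Then for all $i\ne j$: (1) $V_i$ commutes with $V_j^kV_j^{*k}$; (2) $V_i^*$ commutes with $V_j^kV_j^{*k}$; (3) $V_i$ and $V_i^*$ commute with $V_j^k(\mathbf 1-V_jV_j^* )V_j^{*k}$.
   Context: Fix $n\ge1$ and $z_{ij}\in\mathbb T$ ($i\ne j$) with $z_{ji}=\overline{z_{ij}}$; $(V_1,\dots,V_n)$ is doubly non-commuting if the $V_i$ are isometries on $H$ with $V_i^*V_j=\overline{z_{ij}}V_jV_i^*$ for $i\ne j$. $\mathbf 1$ is the identity operator. *)

theory Defs
  imports "HOL-Analysis.Analysis"
begin

text \<open>Convention: the complex inner product is linear in the first argument.\<close>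

class complex_inner = real_inner +
  fixes scaleC :: "complex \<Rightarrow> 'a \<Rightarrow> 'a" (infixr \<open>*\<^sub>C\<close> 75)
    and cinner :: "'a \<Rightarrow> 'a \<Rightarrow> complex"
  assumes scaleC_add_right: "a *\<^sub>C (x + y) = a *\<^sub>C x + a *\<^sub>C y"
    and scaleC_add_left: "(a + b) *\<^sub>C x = a *\<^sub>C x + b *\<^sub>C x"
    and scaleC_scaleC: "a *\<^sub>C (b *\<^sub>C x) = (a * b) *\<^sub>C x"
    and scaleC_one: "1 *\<^sub>C x = x"
    and scaleR_scaleC: "scaleR r x = complex_of_real r *\<^sub>C x"
    and cinner_add_left: "cinner (x + y) z = cinner x z + cinner y z"
    and cinner_scaleC_left: "cinner (a *\<^sub>C x) y = a * cinner x y"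
    and cinner_commute: "cinner x y = cnj (cinner y x)"
    and cinner_real_part: "inner x y = Re (cinner x y)"

class chilbert_space = complex_inner + complete_space

definition clinear :: "('a::complex_inner \<Rightarrow> 'b::complex_inner) \<Rightarrow> bool" where
  "clinear T \<longleftrightarrow> (\<forall>x y. T (x + y) = T x + T y) \<and> (\<forall>c x. T (c *\<^sub>C x) = c *\<^sub>C T x)"

definition isometry :: "('a::chilbert_space \<Rightarrow> 'a) \<Rightarrow> bool" where
  "isometry V \<longleftrightarrow> clinear V \<and> (\<forall>x. norm (V x) = norm x)"

text \<open>Hilbert space adjoint (exists and is unique for bounded operators).\<close>
definition adj :: "('a::chilbert_space \<Rightarrow> 'a) \<Rightarrow> ('a \<Rightarrow> 'a)" where
  "adj T = (THE S. \<forall>x y. cinner (T x) y = cinner x (S y))"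

definition doubly_noncommuting ::
    "nat \<Rightarrow> (nat \<Rightarrow> nat \<Rightarrow> complex) \<Rightarrow> (nat \<Rightarrow> 'a::chilbert_space \<Rightarrow> 'a) \<Rightarrow> bool" where
  "doubly_noncommuting n z V \<longleftrightarrow>
     (\<forall>i\<in>{1..n}. \<forall>j\<in>{1..n}. i \<noteq> j \<longrightarrow> cmod (z i j) = 1 \<and> z j i = cnj (z i j)) \<and>
     (\<forall>i\<in>{1..n}. isometry (V i)) \<and>
     (\<forall>i\<in>{1..n}. \<forall>j\<in>{1..n}. i \<noteq> j \<longrightarrow>
        adj (V i) \<circ> V j = (\<lambda>x. cnj (z i j) *\<^sub>C (V j \<circ> adj (V i)) x))"

end

theory Submission
  imports Defs
begin

text \<open>Write \<open>w = z i j\<close>. For isometries the relation \<open>V_i^* V_j = cnj w V_j V_i^*\<close> forces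
  \<open>V_i V_j = w V_j V_i\<close>: the vectors \<open>V_i V_j x\<close> and \<open>w V_j V_i x\<close> have the same norm as \<open>x\<close>
  and inner product \<open>\<parallel>x\<parallel>^2\<close>, so they coincide. Taking adjoints and dividing by the unimodular
  scalar yields the remaining relations \<open>V_i V_j^* = cnj w V_j^* V_i\<close> and
  \<open>V_i^* V_j^* = w V_j^* V_i^*\<close>. Hence moving \<open>V_i\<close> or \<open>V_i^*\<close> past \<open>V_j^k V_j^*^k\<close> produces
  the factor \<open>w^k cnj w^k = 1\<close>, and \<open>V_j^k (1 - V_j V_j^*) V_j^*^k\<close> is the difference of two such
  products. The adjoint of an isometry exists by the projection theorem applied to its range,
  which is a complete subspace.\<close>

lemma cinner_zero_left [simp]: "cinner 0 y = 0"
  using cinner_add_left[of 0 0 y] by simp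

lemma cinner_minus_left: "cinner (- x) y = - cinner x y"
  using cinner_add_left[of x "- x" y] by (simp add: eq_neg_iff_add_eq_0 add.commute)

lemma cinner_diff_left: "cinner (x - y) z = cinner x z - cinner y z"
  using cinner_add_left[of x "- y" z] by (simp add: cinner_minus_left)

lemma cinner_add_right: "cinner x (y + z) = cinner x y + cinner x z"
  by (subst (1 2 3) cinner_commute) (simp add: cinner_add_left)

lemma cinner_diff_right: "cinner x (y - z) = cinner x y - cinner x z"
  by (subst (1 2 3) cinner_commute) (simp add: cinner_diff_left)

lemma cinner_scaleC_right: "cinner x (a *\<^sub>C y) = cnj a * cinner x y"
  by (subst (1 2) cinner_commute) (simp add: cinner_scaleC_left)

lemma cinner_eq_Complex_inner: "cinner x y = Complex (inner x y) (- inner (\<i> *\<^sub>C x) y)"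
  by (simp add: complex_eq_iff cinner_real_part cinner_scaleC_left)

lemma cinner_self_eq_0_iff [simp]: "cinner x x = 0 \<longleftrightarrow> x = 0"
  by (metis cinner_eq_Complex_inner inner_eq_zero_iff complex.sel(1) zero_complex.sel(1)
      cinner_zero_left)

lemma cinner_extensionality: "(\<And>x. cinner x y = cinner x y') \<Longrightarrow> y = y'"
  by (metis cinner_diff_right cinner_self_eq_0_iff right_minus_eq)

section \<open>Best approximation in complete convex sets\<close>

lemma Cauchy_of_dist_bound:
  fixes X :: "nat \<Rightarrow> 'a::metric_space"
  assumes g: "g \<longlonglongrightarrow> 0" and bound: "\<And>p q. (dist (X p) (X q))\<^sup>2 \<le> g p + g q"
  shows "Cauchy X"
proof (rule metric_CauchyI)
  fix e :: real assume "0 < e"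
  then obtain N where N: "\<And>n. n \<ge> N \<Longrightarrow> \<bar>g n\<bar> < e\<^sup>2 / 2"
    using g by (metis LIMSEQ_D half_gt_zero diff_zero real_norm_def zero_less_power)
  have "dist (X p) (X q) < e" if "p \<ge> N" "q \<ge> N" for p q
  proof -
    have "(dist (X p) (X q))\<^sup>2 < e\<^sup>2"
      using bound[of p q] N[OF that(1)] N[OF that(2)] by linarith
    then show ?thesis using \<open>0 < e\<close> by (simp add: power_less_imp_less_base)
  qed
  then show "\<exists>M. \<forall>p\<ge>M. \<forall>q\<ge>M. dist (X p) (X q) < e" by blast
qed

lemma exists_closest_point_complete_convex:
  fixes S :: "'a::real_inner set"
  assumes "complete S" "convex S" "S \<noteq> {}"
  obtains x where "x \<in> S" "\<And>y. y \<in> S \<Longrightarrow> dist a x \<le> dist a y"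
proof -
  define D where "D = infdist a S"
  have "\<exists>y\<in>S. dist a y < D + 1 / Suc n" for n
  proof -
    have "infdist a S < D + 1 / Suc n" unfolding D_def by simp
    then show ?thesis
      using assms(3) by (subst (asm) infdist_notempty[OF assms(3)], subst (asm) cINF_less_iff) auto
  qed
  then obtain X where X: "\<And>n. X n \<in> S" "\<And>n. dist a (X n) < D + 1 / Suc n"
    by metis
  have D_le: "D \<le> dist a y" if "y \<in> S" for y
    unfolding D_def using that by (rule infdist_le)
  define f where "f n = 2 * ((D + 1 / Suc n)\<^sup>2 - D\<^sup>2)" for n
  have parallelogram: "(dist (X p) (X q))\<^sup>2 \<le> f p + f q" for p q
  proof -
    let ?u = "a - X p" and ?v = "a - X q"
    let ?m = "(1/2) *\<^sub>R X p + (1/2) *\<^sub>R X q"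
    have "?m \<in> S"
      using convexD[OF assms(2) X(1) X(1)] by simp
    moreover have "?u + ?v = 2 *\<^sub>R (a - ?m)"
      by (simp add: algebra_simps flip: scaleR_2)
    ultimately have "2 * D \<le> norm (?u + ?v)"
      using D_le by (simp add: dist_norm)
    then have "(2 * D)\<^sup>2 \<le> (norm (?u + ?v))\<^sup>2"
      by (rule power_mono) (simp add: D_def infdist_nonneg)
    then have mid: "4 * D\<^sup>2 \<le> (norm (?u + ?v))\<^sup>2"
      by (simp add: power_mult_distrib)
    have "(norm (?u - ?v))\<^sup>2 + (norm (?u + ?v))\<^sup>2 = 2 * (norm ?u)\<^sup>2 + 2 * (norm ?v)\<^sup>2"
      by (simp add: power2_norm_eq_inner inner_add_left inner_add_right inner_diff_left
          inner_diff_right inner_commute)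
    moreover have "(norm ?u)\<^sup>2 \<le> (D + 1 / Suc p)\<^sup>2" "(norm ?v)\<^sup>2 \<le> (D + 1 / Suc q)\<^sup>2"
      using X(2) by (simp_all add: dist_norm power_mono less_imp_le)
    moreover have "(norm (?u - ?v))\<^sup>2 = (dist (X p) (X q))\<^sup>2" by (simp add: dist_norm norm_minus_commute)
    ultimately show ?thesis using mid unfolding f_def by argo
  qed
  have "f \<longlonglongrightarrow> 2 * ((D + 0)\<^sup>2 - D\<^sup>2)"
    unfolding f_def
    by (intro tendsto_intros LIMSEQ_inverse_real_of_nat[unfolded inverse_eq_divide])
  then have "f \<longlonglongrightarrow> 0" by simp
  from this parallelogram have "Cauchy X" by (rule Cauchy_of_dist_bound)
  then obtain x where "x \<in> S" and lim: "X \<longlonglongrightarrow> x"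
    using assms(1) X(1) by (meson completeE)
  have "(\<lambda>n. dist a (X n)) \<longlonglongrightarrow> dist a x" by (intro tendsto_intros lim)
  moreover have "(\<lambda>n. D + 1 / Suc n) \<longlonglongrightarrow> D + 0"
    by (intro tendsto_intros LIMSEQ_inverse_real_of_nat[unfolded inverse_eq_divide])
  ultimately have "dist a x \<le> D"
    using X(2) by (simp add: LIMSEQ_le less_imp_le)
  with \<open>x \<in> S\<close> D_le show thesis by (meson order_trans that)
qed

lemma closest_point_subspace_orthogonal:
  fixes S :: "'a::real_inner set"
  assumes "subspace S" "closed S" "x \<in> S" "y \<in> S"
    and "\<And>z. z \<in> S \<Longrightarrow> dist a x \<le> dist a z"
  shows "inner (a - x) y = 0"
proof -
  have "inner (a - x) (x' - x) \<le> 0" if "x' \<in> S" for x'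
    using any_closest_point_dot[OF subspace_imp_convex[OF assms(1)] assms(2,3) that] assms(5)
    by blast
  from this[of "x + y"] this[of "x - y"] show ?thesis
    using assms(1,3,4) by (simp add: subspace_add subspace_diff)
qed

lemma clinear_zero [simp]: "clinear T \<Longrightarrow> T 0 = 0"
  unfolding clinear_def by (metis add_cancel_right_right)

lemma clinear_diff: "clinear T \<Longrightarrow> T (x - y) = T x - T y"
  unfolding clinear_def by (metis add_diff_cancel diff_add_cancel)

lemma clinear_scaleR: "clinear T \<Longrightarrow> T (r *\<^sub>R x) = r *\<^sub>R T x"
  unfolding clinear_def by (simp add: scaleR_scaleC)

lemma clinear_funpow:
  fixes T :: "'a::complex_inner \<Rightarrow> 'a"
  shows "clinear T \<Longrightarrow> clinear (T ^^ k)"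
  by (induction k) (simp_all add: clinear_def)

lemma isometry_clinear: "isometry V \<Longrightarrow> clinear V"
  by (simp add: isometry_def)

lemma isometry_norm: "isometry V \<Longrightarrow> norm (V x) = norm x"
  by (simp add: isometry_def)

lemma isometry_cinner:
  assumes "isometry V"
  shows "cinner (V x) (V y) = cinner x y"
proof -
  have inner_eq: "inner (V x) (V y) = inner x y" for x y
  proof -
    have "V x + V y = V (x + y)"
      using isometry_clinear[OF assms] by (simp add: clinear_def)
    then show ?thesis
      by (simp only: dot_norm isometry_norm[OF assms])
  qed
  have "\<i> *\<^sub>C V x = V (\<i> *\<^sub>C x)"
    using isometry_clinear[OF assms] by (simp add: clinear_def)
  then show ?thesis
    by (simp only: cinner_eq_Complex_inner inner_eq)
qed

lemma isometry_range_subspace: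
  assumes "isometry V"
  shows "subspace (range V)"
  unfolding subspace_def
proof (intro conjI ballI allI)
  have lin: "clinear V" by (rule isometry_clinear[OF assms])
  show "0 \<in> range V"
    using clinear_zero[OF lin] by (metis rangeI)
  fix u v assume "u \<in> range V" "v \<in> range V"
  then obtain x y where "u = V x" "v = V y" by blast
  then show "u + v \<in> range V"
    using lin unfolding clinear_def by (metis rangeI)
next
  fix c u assume "u \<in> range V"
  then show "c *\<^sub>R u \<in> range V"
    using clinear_scaleR[OF isometry_clinear[OF assms]] by (metis rangeE rangeI)
qed

lemma isometry_range_complete:
  fixes V :: "'a::chilbert_space \<Rightarrow> 'a"
  assumes "isometry V"
  shows "complete (range V)"
proof (rule complete_isometric_image[where e = 1])
  show "bounded_linear V"
    using isometry_clinear[OF assms]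
    by (intro bounded_linear_intro[where K = 1])
      (simp_all add: clinear_def clinear_scaleR isometry_norm[OF assms])
qed (simp_all add: complete_UNIV isometry_norm[OF assms])

definition has_adjoint :: "('a::chilbert_space \<Rightarrow> 'a) \<Rightarrow> bool" where
  "has_adjoint T \<longleftrightarrow> (\<forall>x y. cinner (T x) y = cinner x (adj T y))"

lemma adj_eqI:
  assumes "\<And>x y. cinner (T x) y = cinner x (S y)"
  shows "adj T = S"
  unfolding adj_def
proof (rule the_equality)
  fix S' assume "\<forall>x y. cinner (T x) y = cinner x (S' y)"
  then show "S' = S"
    using assms by (metis cinner_extensionality ext)
qed (use assms in blast)

lemma has_adjointI:
  assumes "\<And>x y. cinner (T x) y = cinner x (S y)"
  shows "has_adjoint T"
  using assms by (simp add: has_adjoint_def adj_eqI)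

lemma isometry_has_adjoint:
  fixes V :: "'a::chilbert_space \<Rightarrow> 'a"
  assumes "isometry V"
  shows "has_adjoint V"
proof -
  have "\<exists>x. \<forall>u. cinner (V u) y = cinner u x" for y
  proof -
    \<comment> \<open>\<open>x\<close> is the preimage of the closest point to \<open>y\<close> in the range of \<open>V\<close>\<close>
    obtain p where "p \<in> range V" and closest: "\<And>q. q \<in> range V \<Longrightarrow> dist y p \<le> dist y q"
      using exists_closest_point_complete_convex[OF isometry_range_complete[OF assms]
          subspace_imp_convex[OF isometry_range_subspace[OF assms]]]
      by blast
    then obtain x where "p = V x" by blast
    have orth: "inner (y - V x) (V u) = 0" for u
      using closest_point_subspace_orthogonal[OF isometry_range_subspace[OF assms]
          complete_imp_closed[OF isometry_range_complete[OF assms]] \<open>p \<in> range V\<close>]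
        closest \<open>p = V x\<close> by blast
    have "cinner (V u) (y - V x) = 0" for u
    proof -
      have "\<i> *\<^sub>C V u = V (\<i> *\<^sub>C u)"
        using isometry_clinear[OF assms] by (simp add: clinear_def)
      then show ?thesis
        using orth[of u] orth[of "\<i> *\<^sub>C u"]
        by (simp add: cinner_eq_Complex_inner inner_commute complex_eq_iff)
    qed
    then have "cinner (V u) y = cinner u x" for u
      by (simp add: cinner_diff_right isometry_cinner[OF assms])
    then show ?thesis by blast
  qed
  then obtain S where "\<And>u y. cinner (V u) y = cinner u (S y)" by metis
  then show ?thesis by (rule has_adjointI)
qed

lemma clinear_adj:
  assumes "has_adjoint T"
  shows "clinear (adj T)"
  unfolding clinear_def
proof (intro conjI allI; rule cinner_extensionality)
  have adjoint: "cinner (T u) y = cinner u (adj T y)" for u y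
    using assms by (simp add: has_adjoint_def)
  show "cinner u (adj T (x + y)) = cinner u (adj T x + adj T y)" for u x y
    by (simp flip: adjoint add: cinner_add_right)
  show "cinner u (adj T (c *\<^sub>C x)) = cinner u (c *\<^sub>C adj T x)" for u c x
    by (simp flip: adjoint add: cinner_scaleC_right)
qed

lemma isometry_adj_cancel:
  assumes "isometry V"
  shows "adj V (V x) = x"
  using isometry_has_adjoint[OF assms] isometry_cinner[OF assms]
  by (metis cinner_extensionality has_adjoint_def)

section \<open>Operators commuting up to a scalar\<close>

definition q_commute :: "complex \<Rightarrow> ('a::complex_inner \<Rightarrow> 'a) \<Rightarrow> ('a \<Rightarrow> 'a) \<Rightarrow> bool" where
  "q_commute q F G \<longleftrightarrow> (\<forall>x. F (G x) = q *\<^sub>C G (F x))"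

lemma q_commute_one_iff: "q_commute 1 F G \<longleftrightarrow> F \<circ> G = G \<circ> F"
  by (simp add: q_commute_def scaleC_one fun_eq_iff)

lemma q_commute_swap:
  assumes "q_commute q F G" "q * r = 1"
  shows "q_commute r G F"
  using assms by (simp add: q_commute_def scaleC_scaleC mult.commute scaleC_one)

lemma q_commute_comp:
  assumes "clinear G" "q_commute q F G" "q_commute r F H"
  shows "q_commute (q * r) F (G \<circ> H)"
  using assms by (simp add: q_commute_def clinear_def scaleC_scaleC)

lemma q_commute_funpow:
  fixes G :: "'a::complex_inner \<Rightarrow> 'a"
  assumes "clinear G" "q_commute q F G"
  shows "q_commute (q ^ k) F (G ^^ k)"
proof (induction k)
  case 0
  then show ?case by (simp add: q_commute_def scaleC_one)
next
  case (Suc k)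
  then show ?case
    using q_commute_comp[OF assms(1,2) Suc] by (simp only: funpow.simps(2) power_Suc)
qed

lemma q_commute_adj:
  assumes "has_adjoint F" "has_adjoint G" "q_commute q F G"
  shows "q_commute (cnj q) (adj G) (adj F)"
  unfolding q_commute_def
proof
  fix x
  have "cinner u (adj G (adj F x)) = cinner u (cnj q *\<^sub>C adj F (adj G x))" for u
    using assms unfolding has_adjoint_def q_commute_def
    by (metis cinner_scaleC_left cinner_scaleC_right complex_cnj_cnj)
  then show "adj G (adj F x) = cnj q *\<^sub>C adj F (adj G x)"
    by (rule cinner_extensionality)
qed

lemma cmod_eq_1_mult_cnj: "cmod q = 1 \<Longrightarrow> q * cnj q = 1"
  using complex_norm_square[of q] by simp

lemma isometries_q_commute:
  assumes "isometry V" "isometry W" "cmod q = 1"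
    and "q_commute (cnj q) (adj V) W"
  shows "q_commute q V W"
  unfolding q_commute_def
proof
  fix x
  let ?Y = "V (W x)" and ?X = "W (V x)" and ?c = "cinner x x"
  have XX: "cinner ?X ?X = ?c" and YY: "cinner ?Y ?Y = ?c"
    using assms(1,2) by (simp_all add: isometry_cinner)
  have "cinner ?Y ?X = cinner (W x) (adj V ?X)"
    using isometry_has_adjoint[OF assms(1)] by (simp add: has_adjoint_def)
  also have "\<dots> = cinner (W x) (cnj q *\<^sub>C W x)"
    using assms(4) by (simp add: q_commute_def isometry_adj_cancel[OF assms(1)])
  also have "\<dots> = q * ?c"
    using assms(2) by (simp add: cinner_scaleC_right isometry_cinner)
  finally have YX: "cinner ?Y ?X = q * ?c" .
  then have XY: "cinner ?X ?Y = cnj q * ?c"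
    by (metis cinner_commute complex_cnj_mult)
  have q: "q * cnj q = 1"
    using assms(3) by (rule cmod_eq_1_mult_cnj)
  \<comment> \<open>equality case of Cauchy--Schwarz\<close>
  have "cinner (?Y - q *\<^sub>C ?X) (?Y - q *\<^sub>C ?X)
      = cinner ?Y ?Y - q * cinner ?X ?Y - cnj q * (cinner ?Y ?X - q * cinner ?X ?X)"
    by (simp only: cinner_diff_left cinner_diff_right cinner_scaleC_left cinner_scaleC_right)
  also have "\<dots> = 0"
    unfolding XX YY XY YX using q by (simp add: algebra_simps)
  finally show "?Y = q *\<^sub>C ?X" by simp
qed

lemma commute_funpow_comp_funpow:
  fixes F G H :: "'a::complex_inner \<Rightarrow> 'a"
  assumes "clinear G" "clinear H" "q_commute q F G" "q_commute (cnj q) F H" "cmod q = 1"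
  shows "F \<circ> ((G ^^ k) \<circ> (H ^^ k)) = ((G ^^ k) \<circ> (H ^^ k)) \<circ> F"
proof -
  have "q_commute (q ^ k * cnj q ^ k) F ((G ^^ k) \<circ> (H ^^ k))"
    using assms(1-4) by (intro q_commute_comp q_commute_funpow clinear_funpow)
  moreover have "q ^ k * cnj q ^ k = 1"
    using cmod_eq_1_mult_cnj[OF assms(5)] by (simp flip: power_mult_distrib)
  ultimately show ?thesis by (simp add: q_commute_one_iff)
qed

lemma commute_diff:
  assumes "clinear F" "F \<circ> A = A \<circ> F" "F \<circ> B = B \<circ> F"
  shows "F \<circ> (\<lambda>x. A x - B x) = (\<lambda>x. A x - B x) \<circ> F"
  using assms by (simp add: fun_eq_iff clinear_diff)

lemma funpow_defect_eq:
  fixes G H :: "'a::complex_inner \<Rightarrow> 'a"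
  assumes "clinear G"
  shows "(G ^^ k) \<circ> (\<lambda>x. x - G (H x)) \<circ> (H ^^ k)
    = (\<lambda>x. ((G ^^ k) \<circ> (H ^^ k)) x - ((G ^^ Suc k) \<circ> (H ^^ Suc k)) x)"
  using clinear_funpow[OF assms] by (simp add: fun_eq_iff clinear_diff funpow_swap1)

lemma isometries_commute_funpow_comp_funpow_adj:
  assumes "isometry V" "isometry W" "cmod q = 1"
    and "q_commute (cnj q) (adj V) W" "q_commute q (adj W) V"
  shows "V \<circ> ((W ^^ k) \<circ> (adj W ^^ k)) = ((W ^^ k) \<circ> (adj W ^^ k)) \<circ> V"
    and "adj V \<circ> ((W ^^ k) \<circ> (adj W ^^ k)) = ((W ^^ k) \<circ> (adj W ^^ k)) \<circ> adj V"
proof -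
  have adjoints: "has_adjoint V" "has_adjoint W"
    using assms(1,2) by (simp_all add: isometry_has_adjoint)
  have linear: "clinear W" "clinear (adj W)"
    using assms(2) adjoints(2) by (simp_all add: isometry_clinear clinear_adj)
  have q: "q * cnj q = 1" "cnj q * q = 1"
    using cmod_eq_1_mult_cnj[OF assms(3)] by (simp_all add: mult.commute)
  have V_W: "q_commute q V W"
    using assms(1-4) by (rule isometries_q_commute)
  have V_adjW: "q_commute (cnj q) V (adj W)"
    using assms(5) q(1) by (rule q_commute_swap)
  have adjV_adjW: "q_commute (cnj (cnj q)) (adj V) (adj W)"
    using q_commute_adj[OF adjoints V_W] q(2) by (simp add: q_commute_swap)
  show "V \<circ> ((W ^^ k) \<circ> (adj W ^^ k)) = ((W ^^ k) \<circ> (adj W ^^ k)) \<circ> V"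
    using linear V_W V_adjW assms(3) by (rule commute_funpow_comp_funpow)
  show "adj V \<circ> ((W ^^ k) \<circ> (adj W ^^ k)) = ((W ^^ k) \<circ> (adj W ^^ k)) \<circ> adj V"
    using linear assms(4) adjV_adjW by (rule commute_funpow_comp_funpow) (simp add: assms(3))
qed

lemma doubly_noncommutingD:
  assumes "doubly_noncommuting n z V" "i \<in> {1..n}" "j \<in> {1..n}" "i \<noteq> j"
  shows "isometry (V i)" "cmod (z i j) = 1"
    and "q_commute (cnj (z i j)) (adj (V i)) (V j)" "q_commute (z i j) (adj (V j)) (V i)"
proof -
  note dnc = assms(1)[unfolded doubly_noncommuting_def]
  note unimodular = dnc[THEN conjunct1, rule_format]
    and relation = dnc[THEN conjunct2, THEN conjunct2, rule_format]
  show "isometry (V i)"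
    using dnc assms(2) by blast
  show "cmod (z i j) = 1"
    using unimodular[OF assms(2-4)] by blast
  show "q_commute (cnj (z i j)) (adj (V i)) (V j)" "q_commute (z i j) (adj (V j)) (V i)"
    using relation[OF assms(2-4)] relation[OF assms(3,2) assms(4)[symmetric]]
      unimodular[OF assms(2-4)]
    by (simp_all add: q_commute_def fun_eq_iff)
qed

theorem corollary3p2:
  fixes n :: nat and z :: "nat \<Rightarrow> nat \<Rightarrow> complex"
    and V :: "nat \<Rightarrow> 'h::chilbert_space \<Rightarrow> 'h" and k :: nat
  assumes "n \<ge> 1"
    and "doubly_noncommuting n z V"
    and "i \<in> {1..n}" and "j \<in> {1..n}" and "i \<noteq> j"
  shows "(V i \<circ> ((V j ^^ k) \<circ> (adj (V j) ^^ k)) = ((V j ^^ k) \<circ> (adj (V j) ^^ k)) \<circ> V i) \<and>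
         (adj (V i) \<circ> ((V j ^^ k) \<circ> (adj (V j) ^^ k))
           = ((V j ^^ k) \<circ> (adj (V j) ^^ k)) \<circ> adj (V i)) \<and>
         (V i \<circ> ((V j ^^ k) \<circ> (\<lambda>x. x - V j (adj (V j) x)) \<circ> (adj (V j) ^^ k))
           = ((V j ^^ k) \<circ> (\<lambda>x. x - V j (adj (V j) x)) \<circ> (adj (V j) ^^ k)) \<circ> V i) \<and>
         (adj (V i) \<circ> ((V j ^^ k) \<circ> (\<lambda>x. x - V j (adj (V j) x)) \<circ> (adj (V j) ^^ k))
           = ((V j ^^ k) \<circ> (\<lambda>x. x - V j (adj (V j) x)) \<circ> (adj (V j) ^^ k)) \<circ> adj (V i))"
proof -
  have iso_j: "isometry (V j)"
    using assms(2,4,3) assms(5)[symmetric] by (rule doubly_noncommutingD)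
  note pair = doubly_noncommutingD[OF assms(2-5)]
  note commutes = isometries_commute_funpow_comp_funpow_adj[OF pair(1) iso_j pair(2-4)]
  have linear: "clinear (V i)" "clinear (adj (V i))" "clinear (V j)"
    using pair(1) iso_j
    by (simp_all add: isometry_clinear clinear_adj isometry_has_adjoint)
  show ?thesis
    unfolding funpow_defect_eq[OF linear(3)]
    using commutes commute_diff[OF linear(1)] commute_diff[OF linear(2)] by blast
qed

end
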